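(* Let $(G,\cdot)$ be a two-step nilpotent group and $n$ an integer, and define $a\circ b=a\cdot a^{-n}ba^{n}=ab[b,a]^n$ for $a,b\in G$. Then $(G,\circ)$ is a two-step nilpotent group.
   Context: A two-step nilpotent group is a group of nilpotency class at most $2$, i.e. all commutators are central; the commutator convention is $[a,b]=a^{-1}b^{-1}ab$. (For this operation, $(G,\cdot,\circ)$ is the skew left brace associated with the post-group $a\triangleright b=a^{-n}ba^n$ via $a\circ b=a\cdot(a\triangleright b)$.) *)

theory Defs
  imports "HOL-Algebra.Group"
begin

definition commutator :: "('a, 'b) monoid_scheme \<Rightarrow> 'a \<Rightarrow> 'a \<Rightarrow> 'a" where
  "commutator G a b = inv\<^bsub>G\<^esub> a \<otimes>\<^bsub>G\<^esub> inv\<^bsub>G\<^esub> b \<otimes>\<^bsub>G\<^esub> a \<otimes>\<^bsub>G\<^esub> b"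

definition two_step_nilpotent :: "('a, 'b) monoid_scheme \<Rightarrow> bool" where
  "two_step_nilpotent G \<longleftrightarrow> group G \<and>
     (\<forall>a\<in>carrier G. \<forall>b\<in>carrier G. \<forall>c\<in>carrier G.
        commutator G a b \<otimes>\<^bsub>G\<^esub> c = c \<otimes>\<^bsub>G\<^esub> commutator G a b)"

definition circ_struct :: "('a, 'b) monoid_scheme \<Rightarrow> int \<Rightarrow> 'a monoid" where
  "circ_struct G n =
     \<lparr> carrier = carrier G,
       mult = (\<lambda>a b. a \<otimes>\<^bsub>G\<^esub> (a [^]\<^bsub>G\<^esub> (- n) \<otimes>\<^bsub>G\<^esub> b \<otimes>\<^bsub>G\<^esub> a [^]\<^bsub>G\<^esub> n)),
       one = \<one>\<^bsub>G\<^esub> \<rparr>"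

end

theory Submission
  imports Defs "HOL-Algebra.Generated_Groups"
begin

text \<open>In a group of class two the commutator map is bimultiplicative, takes values in the
  centre and is trivial as soon as one argument is central. Since
  \<open>a\<^sup>-\<^sup>n b a\<^sup>n = b [b, a\<^sup>n] = b [b, a]\<^sup>n\<close>, the operation \<open>a \<circ> b\<close> is the
  product \<open>a b\<close> twisted by the central form \<open>\<beta>(a, b) = [b, a]\<^sup>n\<close>.
  Twisting a group by any central bimultiplicative form that is trivial on central
  arguments gives again a group: associativity reduces to reordering central factors, and
  central elements stay central. Moreover \<open>b \<circ> a\<close> differs from \<open>a \<circ> b\<close> only by a
  central factor, so every commutator of the twisted group is central.\<close>

definition center :: "('a, 'b) monoid_scheme \<Rightarrow> 'a set" where
  "center G = {z \<in> carrier G. \<forall>x\<in>carrier G. z \<otimes>\<^bsub>G\<^esub> x = x \<otimes>\<^bsub>G\<^esub> z}"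

context group
begin

lemma inv_mult_cancel_left [simp]:
  "x \<in> carrier G \<Longrightarrow> y \<in> carrier G \<Longrightarrow> inv x \<otimes> (x \<otimes> y) = y"
  by (simp flip: m_assoc)

lemma mult_inv_cancel_left [simp]:
  "x \<in> carrier G \<Longrightarrow> y \<in> carrier G \<Longrightarrow> x \<otimes> (inv x \<otimes> y) = y"
  by (simp flip: m_assoc)

lemma center_closed: "z \<in> center G \<Longrightarrow> z \<in> carrier G"
  by (simp add: center_def)

lemma center_commute: "z \<in> center G \<Longrightarrow> x \<in> carrier G \<Longrightarrow> z \<otimes> x = x \<otimes> z"
  by (simp add: center_def)

lemma subgroup_center: "subgroup (center G) G"
proof
  fix z w assume z: "z \<in> center G" and w: "w \<in> center G"
  have [simp]: "z \<in> carrier G" "w \<in> carrier G" using z w by (simp_all add: center_def)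
  have "z \<otimes> w \<otimes> x = x \<otimes> (z \<otimes> w)" if "x \<in> carrier G" for x
  proof -
    have "z \<otimes> w \<otimes> x = z \<otimes> (x \<otimes> w)" using that by (simp add: m_assoc center_commute[OF w])
    also have "\<dots> = x \<otimes> (z \<otimes> w)"
      using that by (simp add: center_commute[OF z that] flip: m_assoc)
    finally show ?thesis .
  qed
  then show "z \<otimes> w \<in> center G" by (simp add: center_def)
  have "inv z \<otimes> x = x \<otimes> inv z" if "x \<in> carrier G" for x
  proof -
    have "inv z \<otimes> x = inv z \<otimes> (x \<otimes> z) \<otimes> inv z"
      using that by (simp add: m_assoc)
    also have "\<dots> = x \<otimes> inv z"
      using that by (simp add: center_commute[OF z that, symmetric] m_assoc)
    finally show ?thesis .
  qed
  then show "inv z \<in> center G" by (simp add: center_def)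
qed (auto simp: center_def)

lemma commutator_closed [simp]:
  "a \<in> carrier G \<Longrightarrow> b \<in> carrier G \<Longrightarrow> commutator G a b \<in> carrier G"
  by (simp add: commutator_def)

lemma inv_commutator:
  "a \<in> carrier G \<Longrightarrow> b \<in> carrier G \<Longrightarrow> inv (commutator G a b) = commutator G b a"
  by (simp add: commutator_def inv_mult_group m_assoc)

lemma commutator_center_right:
  assumes "z \<in> center G" "x \<in> carrier G"
  shows "commutator G x z = \<one>"
proof -
  have "inv z \<otimes> x = x \<otimes> inv z"
    using assms by (simp add: center_commute subgroup.m_inv_closed[OF subgroup_center])
  then show ?thesis
    using assms center_closed by (simp add: commutator_def m_assoc)
qed

lemma commutator_center_left:
  "z \<in> center G \<Longrightarrow> x \<in> carrier G \<Longrightarrow> commutator G z x = \<one>"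
  by (metis center_closed commutator_center_right inv_commutator inv_one)

lemma conjugate_eq_mult_commutator:
  "u \<in> carrier G \<Longrightarrow> x \<in> carrier G \<Longrightarrow> inv u \<otimes> x \<otimes> u = x \<otimes> commutator G x u"
  by (simp add: commutator_def m_assoc)

lemma commutator_eq_inv:
  assumes "a \<in> carrier G" "b \<in> carrier G" "w \<in> carrier G" and "b \<otimes> a = a \<otimes> b \<otimes> w"
  shows "commutator G a b = inv w"
proof -
  have "commutator G a b = inv (b \<otimes> a) \<otimes> (a \<otimes> b)"
    using assms(1,2) by (simp add: commutator_def inv_mult_group m_assoc)
  also have "\<dots> = inv w"
    unfolding assms(4) using assms(1-3) by (simp add: inv_mult_group m_assoc)
  finally show ?thesis .
qed

end

locale two_step_nilpotent_group = group +
  assumes commutator_in_center: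
    "a \<in> carrier G \<Longrightarrow> b \<in> carrier G \<Longrightarrow> commutator G a b \<in> center G"

lemma two_step_nilpotent_iff: "two_step_nilpotent G \<longleftrightarrow> two_step_nilpotent_group G"
  by (auto simp: two_step_nilpotent_def two_step_nilpotent_group_def
      two_step_nilpotent_group_axioms_def center_def group.commutator_closed)

context two_step_nilpotent_group
begin

lemma commutator_mult_right:
  assumes x: "x \<in> carrier G" and u: "u \<in> carrier G" and v: "v \<in> carrier G"
  shows "commutator G x (u \<otimes> v) = commutator G x u \<otimes> commutator G x v"
proof -
  define c where "c = commutator G x u"
  have c: "c \<in> center G" and [simp]: "c \<in> carrier G"
    using x u by (simp_all add: c_def commutator_in_center)
  have "commutator G x (u \<otimes> v) = inv x \<otimes> inv v \<otimes> (inv u \<otimes> x \<otimes> u) \<otimes> v"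
    using assms by (simp add: commutator_def inv_mult_group m_assoc)
  also have "\<dots> = inv x \<otimes> inv v \<otimes> x \<otimes> (c \<otimes> v)"
    using assms by (subst conjugate_eq_mult_commutator) (simp_all add: c_def m_assoc)
  also have "\<dots> = c \<otimes> commutator G x v"
    using assms by (simp add: center_commute[OF c] commutator_def m_assoc)
  finally show ?thesis by (simp add: c_def)
qed

lemma commutator_mult_left:
  assumes "x \<in> carrier G" "y \<in> carrier G" "u \<in> carrier G"
  shows "commutator G (x \<otimes> y) u = commutator G x u \<otimes> commutator G y u"
proof -
  have "commutator G (x \<otimes> y) u = inv (commutator G u (x \<otimes> y))"
    using assms by (simp add: inv_commutator)
  also have "\<dots> = inv (commutator G u y) \<otimes> inv (commutator G u x)"
    using assms by (simp add: commutator_mult_right inv_mult_group)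
  also have "\<dots> = commutator G x u \<otimes> commutator G y u"
    using assms by (simp add: inv_commutator center_commute commutator_in_center)
  finally show ?thesis .
qed

lemma commutator_int_pow_right:
  assumes "x \<in> carrier G" "u \<in> carrier G"
  shows "commutator G x (u [^] (k::int)) = commutator G x u [^] k"
proof -
  have "commutator G x \<in> hom G G"
    using assms by (intro homI) (simp_all add: commutator_mult_right)
  then show ?thesis
    using assms by (simp add: hom_int_pow is_group)
qed

end

locale central_twist = group G for G (structure) +
  fixes H :: "('a, 'c) monoid_scheme" and \<beta> :: "'a \<Rightarrow> 'a \<Rightarrow> 'a"
  assumes carrier_twist [simp]: "carrier H = carrier G"
    and one_twist [simp]: "\<one>\<^bsub>H\<^esub> = \<one>"
    and mult_twist: "a \<in> carrier G \<Longrightarrow> b \<in> carrier G \<Longrightarrow> a \<otimes>\<^bsub>H\<^esub> b = a \<otimes> b \<otimes> \<beta> a b"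
    and twist_in_center: "a \<in> carrier G \<Longrightarrow> b \<in> carrier G \<Longrightarrow> \<beta> a b \<in> center G"
    and twist_mult_left:
      "a \<in> carrier G \<Longrightarrow> b \<in> carrier G \<Longrightarrow> c \<in> carrier G \<Longrightarrow> \<beta> (a \<otimes> b) c = \<beta> a c \<otimes> \<beta> b c"
    and twist_mult_right:
      "a \<in> carrier G \<Longrightarrow> b \<in> carrier G \<Longrightarrow> c \<in> carrier G \<Longrightarrow> \<beta> a (b \<otimes> c) = \<beta> a b \<otimes> \<beta> a c"
    and twist_center_left: "z \<in> center G \<Longrightarrow> a \<in> carrier G \<Longrightarrow> \<beta> z a = \<one>"
    and twist_center_right: "z \<in> center G \<Longrightarrow> a \<in> carrier G \<Longrightarrow> \<beta> a z = \<one>"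
begin

lemma twist_closed [simp]: "a \<in> carrier G \<Longrightarrow> b \<in> carrier G \<Longrightarrow> \<beta> a b \<in> carrier G"
  by (simp add: center_closed twist_in_center)

lemma mult_twist_center_left:
  "z \<in> center G \<Longrightarrow> a \<in> carrier G \<Longrightarrow> z \<otimes>\<^bsub>H\<^esub> a = z \<otimes> a"
  by (simp add: mult_twist center_closed twist_center_left)

lemma mult_twist_center_right:
  "z \<in> center G \<Longrightarrow> a \<in> carrier G \<Longrightarrow> a \<otimes>\<^bsub>H\<^esub> z = a \<otimes> z"
  by (simp add: mult_twist center_closed twist_center_right)

lemma twist_assoc:
  assumes a: "a \<in> carrier G" and b: "b \<in> carrier G" and c: "c \<in> carrier G"
  shows "a \<otimes>\<^bsub>H\<^esub> b \<otimes>\<^bsub>H\<^esub> c = a \<otimes>\<^bsub>H\<^esub> (b \<otimes>\<^bsub>H\<^esub> c)"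
proof -
  have ab: "\<beta> a b \<in> center G" and bc: "\<beta> b c \<in> center G"
    and abc: "\<beta> a b \<otimes> \<beta> a c \<in> center G"
    using assms by (simp_all add: twist_in_center subgroup.m_closed[OF subgroup_center])
  have "a \<otimes>\<^bsub>H\<^esub> b \<otimes>\<^bsub>H\<^esub> c = a \<otimes> b \<otimes> (\<beta> a b \<otimes> c) \<otimes> (\<beta> a c \<otimes> \<beta> b c)"
    using assms by (simp add: mult_twist twist_mult_left twist_center_left[OF ab] m_assoc)
  also have "\<dots> = a \<otimes> b \<otimes> c \<otimes> ((\<beta> a b \<otimes> \<beta> a c) \<otimes> \<beta> b c)"
    using assms by (simp add: center_commute[OF ab c] m_assoc)
  also have "\<dots> = a \<otimes> b \<otimes> c \<otimes> (\<beta> b c \<otimes> (\<beta> a b \<otimes> \<beta> a c))"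
    using assms by (simp add: center_commute[OF abc])
  also have "\<dots> = a \<otimes>\<^bsub>H\<^esub> (b \<otimes>\<^bsub>H\<^esub> c)"
    using assms by (simp add: mult_twist twist_mult_right twist_center_right[OF bc] m_assoc)
  finally show ?thesis .
qed

lemma twist_l_inv:
  assumes a: "a \<in> carrier G"
  shows "(inv a \<otimes> \<beta> a a) \<otimes>\<^bsub>H\<^esub> a = \<one>"
proof -
  have aa: "\<beta> a a \<in> center G"
    using a by (simp add: twist_in_center)
  have "\<beta> (inv a) a \<otimes> \<beta> a a = \<beta> (inv a \<otimes> a) a"
    using a by (simp only: twist_mult_left inv_closed)
  also have "\<dots> = \<one>"
    using a by (simp add: twist_center_left subgroup.one_closed[OF subgroup_center])
  finally have inv_twist: "\<beta> (inv a) a \<otimes> \<beta> a a = \<one>" .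
  have "(inv a \<otimes> \<beta> a a) \<otimes>\<^bsub>H\<^esub> a = inv a \<otimes> (\<beta> a a \<otimes> a) \<otimes> \<beta> (inv a) a"
    using a by (simp add: mult_twist twist_mult_left twist_center_left[OF aa] m_assoc)
  also have "\<dots> = \<beta> (inv a) a \<otimes> \<beta> a a"
    using a by (simp add: center_commute[OF aa] m_assoc)
  finally show ?thesis
    using inv_twist by simp
qed

lemma group_twist: "group H"
proof (rule groupI)
  show "x \<otimes>\<^bsub>H\<^esub> y \<in> carrier H" if "x \<in> carrier H" "y \<in> carrier H" for x y
    using that by (simp add: mult_twist)
  show "\<one>\<^bsub>H\<^esub> \<otimes>\<^bsub>H\<^esub> x = x" if "x \<in> carrier H" for x
    using that by (simp add: mult_twist_center_left subgroup.one_closed[OF subgroup_center])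
  show "\<exists>y\<in>carrier H. y \<otimes>\<^bsub>H\<^esub> x = \<one>\<^bsub>H\<^esub>" if "x \<in> carrier H" for x
    using that by (intro bexI[of _ "inv x \<otimes> \<beta> x x"]) (simp_all add: twist_l_inv)
qed (simp_all add: twist_assoc)

lemma inv_twist_center: "z \<in> center G \<Longrightarrow> inv\<^bsub>H\<^esub> z = inv z"
  by (rule group.inv_equality[OF group_twist])
    (simp_all add: center_closed mult_twist_center_right)

lemma center_subset_center_twist: "center G \<subseteq> center H"
proof
  fix z assume z: "z \<in> center G"
  have "z \<otimes>\<^bsub>H\<^esub> x = x \<otimes>\<^bsub>H\<^esub> z" if "x \<in> carrier H" for x
    using that z by (simp add: mult_twist_center_left mult_twist_center_right center_commute)
  then show "z \<in> center H"
    using z by (simp add: center_def)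
qed

lemma two_step_nilpotent_group_twist:
  assumes "two_step_nilpotent_group G"
  shows "two_step_nilpotent_group H"
proof (intro two_step_nilpotent_group.intro two_step_nilpotent_group_axioms.intro group_twist)
  interpret G: two_step_nilpotent_group G by (fact assms)
  fix a b assume "a \<in> carrier H" "b \<in> carrier H"
  then have a: "a \<in> carrier G" and b: "b \<in> carrier G" by simp_all
  define w where "w = inv (\<beta> a b) \<otimes> (commutator G b a \<otimes> \<beta> b a)"
  have w: "w \<in> center G"
    using a b unfolding w_def
    by (intro subgroup.m_closed[OF subgroup_center] subgroup.m_inv_closed[OF subgroup_center])
      (simp_all add: twist_in_center G.commutator_in_center)
  have "a \<otimes>\<^bsub>H\<^esub> b \<otimes>\<^bsub>H\<^esub> w = a \<otimes> b \<otimes> (\<beta> a b \<otimes> w)"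
    using a b w by (simp add: mult_twist twist_center_right center_closed m_assoc)
  also have "\<dots> = b \<otimes> a \<otimes> \<beta> b a"
    using a b by (simp add: w_def commutator_def m_assoc)
  also have "\<dots> = b \<otimes>\<^bsub>H\<^esub> a"
    using a b by (simp add: mult_twist)
  finally have "commutator H a b = inv\<^bsub>H\<^esub> w"
    using a b w by (intro group.commutator_eq_inv[OF group_twist]) (simp_all add: center_closed)
  also have "\<dots> = inv w"
    using w by (rule inv_twist_center)
  finally show "commutator H a b \<in> center H"
    using w center_subset_center_twist subgroup.m_inv_closed[OF subgroup_center] by auto
qed

end

lemma (in two_step_nilpotent_group) central_twist_circ_struct:
  "central_twist G (circ_struct G n) (\<lambda>a b. commutator G b a [^] n)"
proof (intro central_twist.intro central_twist_axioms.intro is_group)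
  fix a b c z
  assume a: "a \<in> carrier G" and b: "b \<in> carrier G" and c: "c \<in> carrier G"
  have "inv (a [^] n) \<otimes> b \<otimes> a [^] n = b \<otimes> commutator G b a [^] n"
    using a b by (simp add: conjugate_eq_mult_commutator commutator_int_pow_right)
  then show "a \<otimes>\<^bsub>circ_struct G n\<^esub> b = a \<otimes> b \<otimes> commutator G b a [^] n"
    using a b by (simp add: circ_struct_def int_pow_neg m_assoc)
  show "commutator G b a [^] n \<in> center G"
    using a b by (simp add: subgroup_int_pow_closed subgroup_center commutator_in_center)
  show "commutator G c (a \<otimes> b) [^] n = commutator G c a [^] n \<otimes> commutator G c b [^] n"
    using a b c by (simp add: commutator_mult_right int_pow_mult_distrib center_commute
        commutator_in_center)
  show "commutator G (b \<otimes> c) a [^] n = commutator G b a [^] n \<otimes> commutator G c a [^] n"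
    using a b c by (simp add: commutator_mult_left int_pow_mult_distrib center_commute
        commutator_in_center)
  show "z \<in> center G \<Longrightarrow> commutator G a z [^] n = \<one>"
    using a by (simp add: commutator_center_right)
  show "z \<in> center G \<Longrightarrow> commutator G z a [^] n = \<one>"
    using a by (simp add: commutator_center_left)
qed (simp_all add: circ_struct_def)

theorem proposition5p4:
  fixes G :: "('a, 'b) monoid_scheme" and n :: int
  assumes "two_step_nilpotent G"
  shows "two_step_nilpotent (circ_struct G n)"
proof -
  interpret two_step_nilpotent_group G
    using assms by (simp add: two_step_nilpotent_iff)
  interpret central_twist G "circ_struct G n" "\<lambda>a b. commutator G b a [^]\<^bsub>G\<^esub> n"
    by (rule central_twist_circ_struct)
  show ?thesis
    using two_step_nilpotent_group_twist two_step_nilpotent_group_axioms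
    by (simp add: two_step_nilpotent_iff)
qed

end
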